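(* Let $\mathbf{C}\in\mathbb{R}^{n\times n}$, $\tilde{\mathbf{S}}\in\mathbb{R}^{m\times n}$, $\mathbf{M}_\rho\in\mathbb{R}^{n\times n}$ and $\mathbf{P}\in\mathbb{R}^{n\times k}$ be matrices such that $\ker\tilde{\mathbf{S}}^\top=\{\mathbf{0}\}$, $\mathbf{C}\tilde{\mathbf{S}}^\top=\mathbf{0}$, and $\mathbf{K}_\rho=\mathbf{P}^\top\mathbf{C}^\top\mathbf{M}_\rho\mathbf{C}\mathbf{P}$ is nonsingular, i.e. $\det(\mathbf{K}_\rho)\neq0$. Then $\mathbf{P}\mathbf{x}$ is not a discrete gradient field, i.e. $\mathbf{P}\mathbf{x}\neq\tilde{\mathbf{S}}^\top\mathbf{y}$ for all $\mathbf{x}\in\mathbb{R}^k\setminus\{\mathbf{0}\}$, $\mathbf{y}\in\mathbb{R}^m\setminus\{\mathbf{0}\}$.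
   Context: In the paper's setting, $\mathbf{C}$ is the discrete curl, $-\tilde{\mathbf{S}}^\top$ the discrete gradient (restricted to degrees of freedom where boundary conditions are imposed) and $\tilde{\mathbf{S}}$ the discrete divergence matrix of a spatial discretisation (FEM with de Rham-conforming bases or FIT); $\mathbf{M}_\rho$ is the resistivity material matrix; and $\mathbf{P}$ is obtained from the projector onto the cotree edges of a tree-cotree gauge in the conducting region by deleting its zero columns. *)

theory Defs
  imports "HOL-Analysis.Analysis"
begin

end

theory Submission
  imports Defs
begin

text \<open>If \<open>P x = S\<^sup>T y\<close> then \<open>C P x = C S\<^sup>T y = 0\<close>, so \<open>K\<^sub>\<rho> x = 0\<close>, and the
  nonsingularity of \<open>K\<^sub>\<rho>\<close> forces \<open>x = 0\<close>.\<close>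

lemma invertible_matrix_vector_eq_0_iff:
  fixes A :: "'a::field^'n^'n"
  assumes "invertible A"
  shows "A *v x = 0 \<longleftrightarrow> x = 0"
  by (metis assms invertible_def matrix_vector_mul_assoc matrix_vector_mul_lid
      matrix_vector_mult_0_right)

lemma matrix_vector_mul_image_eq_0:
  fixes C :: "'a::comm_ring_1^'n^'l" and T :: "'a^'m^'n"
  assumes "C ** T = 0"
  shows "C *v (T *v y) = 0"
  using assms by (simp add: matrix_vector_mul_assoc)

theorem proposition4:
  fixes C :: "real^'n^'n" and S :: "real^'n^'m" and M :: "real^'n^'n" and P :: "real^'k^'n"
  assumes "{y. transpose S *v y = 0} = {0}"
    and "C ** transpose S = 0"
    and "det (transpose P ** transpose C ** M ** C ** P) \<noteq> 0"
  shows "\<forall>x y. x \<noteq> 0 \<longrightarrow> y \<noteq> 0 \<longrightarrow> P *v x \<noteq> transpose S *v y"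
proof (intro allI impI notI)
  fix x :: "real^'k" and y :: "real^'m"
  assume "x \<noteq> 0" and "P *v x = transpose S *v y"
  then have "C *v (P *v x) = 0"
    using assms(2) matrix_vector_mul_image_eq_0 by metis
  then have "(transpose P ** transpose C ** M ** (C ** P)) *v x = 0"
    by (simp add: matrix_vector_mul_assoc[symmetric])
  moreover have "invertible (transpose P ** transpose C ** M ** (C ** P))"
    using assms(3) by (simp add: invertible_det_nz matrix_mul_assoc)
  ultimately show False
    using \<open>x \<noteq> 0\<close> invertible_matrix_vector_eq_0_iff by blast
qed

end
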